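(* Let $\lambda$ be a partition of $n$ with largest part $\lambda_1$, and let $m\ge n-(\lambda_1-1)$. Then there is a bijection between $\mathrm{QYT}_{\le m}(\lambda)$ and the set $\mathrm{SYT}(\lambda)$ of standard Young tableaux of shape $\lambda$; in particular $|\mathrm{QYT}_{\le m}(\lambda)|=|\mathrm{SYT}(\lambda)|$.
   Context: A partition $\lambda=(\lambda_1\ge\lambda_2\ge\cdots\ge\lambda_k>0)$ of $n$ has length $\ell(\lambda)=k$ and size $n=\sum_i\lambda_i$. Its (French) Young diagram has $\lambda_j$ left-justified boxes in row $j$, rows numbered from bottom to top. A semistandard Young tableau (SSYT) of shape $\lambda$ is a filling of the boxes with positive integers that weakly increase from left to right along rows and strictly increase from bottom to top along columns. A standard Young tableau of shape $\lambda$ is an SSYT using each of $1,\dots,n$ exactly once. An SSYT $T$ is quasi-Yamanouchi if for every integer $i>1$ that appears in $T$, the leftmost occurrence of $i$ lies in a column weakly left of (i.e. with column index $\le$ that of) some occurrence of $i-1$ in $T$. $\mathrm{QYT}_{\le m}(\lambda)$ denotes the set of quasi-Yamanouchi tableaux of shape $\lambda$ all of whose entries are at most $m$. *)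

theory Defs
  imports Main
begin

text \<open>Cells are (row, column), 0-indexed,
  row i having lam ! i boxes. A tableau is a function on cells, set to 0 outside
  the diagram so that tableaux of a fixed shape are determined by their entries.\<close>

definition is_partition :: "nat list \<Rightarrow> bool" where
  "is_partition lam \<longleftrightarrow> sorted_wrt (\<ge>) lam \<and> 0 \<notin> set lam"

definition largest_part :: "nat list \<Rightarrow> nat" where
  "largest_part lam = (if lam = [] then 0 else hd lam)"

definition cells :: "nat list \<Rightarrow> (nat \<times> nat) set" where
  "cells lam = {(i, j). i < length lam \<and> j < lam ! i}"

definition is_ssyt :: "nat list \<Rightarrow> (nat \<times> nat \<Rightarrow> nat) \<Rightarrow> bool" where
  "is_ssyt lam T \<longleftrightarrow>
     (\<forall>c\<in>cells lam. 1 \<le> T c) \<and>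
     (\<forall>c. c \<notin> cells lam \<longrightarrow> T c = 0) \<and>
     (\<forall>i j. (i, Suc j) \<in> cells lam \<longrightarrow> T (i, j) \<le> T (i, Suc j)) \<and>
     (\<forall>i j. (Suc i, j) \<in> cells lam \<longrightarrow> T (i, j) < T (Suc i, j))"

definition is_syt :: "nat list \<Rightarrow> (nat \<times> nat \<Rightarrow> nat) \<Rightarrow> bool" where
  "is_syt lam T \<longleftrightarrow> is_ssyt lam T \<and> bij_betw T (cells lam) {1..sum_list lam}"

definition is_quasi_yamanouchi :: "nat list \<Rightarrow> (nat \<times> nat \<Rightarrow> nat) \<Rightarrow> bool" where
  "is_quasi_yamanouchi lam T \<longleftrightarrow>
     (\<forall>i. 1 < i \<and> i \<in> T ` cells lam \<longrightarrow>
        (\<exists>d\<in>cells lam. T d = i - 1 \<and>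
           Min {snd c | c. c \<in> cells lam \<and> T c = i} \<le> snd d))"

definition SYT :: "nat list \<Rightarrow> (nat \<times> nat \<Rightarrow> nat) set" where
  "SYT lam = {T. is_syt lam T}"

definition QYT_le :: "nat \<Rightarrow> nat list \<Rightarrow> (nat \<times> nat \<Rightarrow> nat) set" where
  "QYT_le m lam = {T. is_ssyt lam T \<and> is_quasi_yamanouchi lam T \<and> (\<forall>c\<in>cells lam. T c \<le> m)}"

end

theory Submission
  imports Defs "HOL-Library.Product_Lexorder"
begin

text \<open>Standardization numbers the cells of a semistandard tableau 1, ..., n in increasing
  order of entry, equal entries (which form a horizontal strip) from left to right; the result
  is a standard tableau. Conversely, a standard tableau S is destandardized by giving the cell
  with entry k the value 1 + (number of descents of S below k), where k is a descent if k + 1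
  lies in a strictly higher row. Destandardization always yields a quasi-Yamanouchi tableau,
  and the quasi-Yamanouchi condition says precisely that the entries of a tableau increase
  from one standardized cell to the next only at descents, so the two maps are mutually inverse.
  Finally every descent k has k + 1 in a cell outside the bottom row, so there are at most
  n - largest_part lam descents, and all destandardized entries are at most
  n - largest_part lam + 1 \<le> m.\<close>

section \<open>Partitions and semistandard tableaux\<close>

lemma partition_nth_antimono:
  assumes "is_partition lam" "i \<le> i'" "i' < length lam"
  shows "lam ! i' \<le> lam ! i"
  using assms sorted_wrt_nth_less[of "(\<ge>)" lam i i']
  by (cases "i = i'") (auto simp: is_partition_def)

lemma cells_downward_closed:
  assumes "is_partition lam" "(i', j') \<in> cells lam" "i \<le> i'" "j \<le> j'"
  shows "(i, j) \<in> cells lam"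
  using assms partition_nth_antimono[OF assms(1) assms(3)] by (auto simp: cells_def)

lemma cells_eq_Sigma: "cells lam = Sigma {..<length lam} (\<lambda>i. {..<lam ! i})"
  by (auto simp: cells_def)

lemma finite_cells: "finite (cells lam)"
  by (simp add: cells_eq_Sigma)

lemma card_cells: "card (cells lam) = sum_list lam"
  by (simp add: cells_eq_Sigma card_SigmaI sum_list_sum_nth atLeast0LessThan)

lemma card_bottom_row: "card {c \<in> cells lam. fst c = 0} = largest_part lam"
proof (cases "lam = []")
  case False
  then have "{c \<in> cells lam. fst c = 0} = Pair 0 ` {..<largest_part lam}"
    by (auto simp: cells_def largest_part_def hd_conv_nth)
  then show ?thesis by (simp add: card_image inj_on_def)
qed (simp add: cells_def largest_part_def)

lemma card_upper_rows: "card {c \<in> cells lam. 0 < fst c} + largest_part lam = sum_list lam"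
proof -
  have "cells lam = {c \<in> cells lam. 0 < fst c} \<union> {c \<in> cells lam. fst c = 0}"
    by auto
  then have "card (cells lam) = card {c \<in> cells lam. 0 < fst c} + card {c \<in> cells lam. fst c = 0}"
    using finite_cells by (subst card_Un_disjoint[symmetric]) auto
  then show ?thesis by (simp add: card_cells card_bottom_row)
qed

lemma ssyt_row_mono:
  assumes "is_ssyt lam T" "(i, j') \<in> cells lam" "j \<le> j'"
  shows "T (i, j) \<le> T (i, j')"
  using assms(3,2)
proof (induction j' rule: dec_induct)
  case (step k)
  then have "(i, k) \<in> cells lam" by (auto simp: cells_def)
  then show ?case
    using step assms(1) by (auto simp: is_ssyt_def intro: order_trans)
qed simp

lemma ssyt_col_strict_mono:
  assumes "is_partition lam" "is_ssyt lam T" "(i', j) \<in> cells lam" "i < i'"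
  shows "T (i, j) < T (i', j)"
  using Suc_leI[OF assms(4)] assms(3)
proof (induction i' rule: dec_induct)
  case base
  then show ?case using assms(2) by (auto simp: is_ssyt_def)
next
  case (step k)
  then have "(k, j) \<in> cells lam"
    using cells_downward_closed[OF assms(1)] by fastforce
  then show ?case
    using step assms(2) by (auto simp: is_ssyt_def intro: less_trans)
qed

lemma ssyt_mono:
  assumes "is_partition lam" "is_ssyt lam T" "(i', j') \<in> cells lam" "i \<le> i'" "j \<le> j'"
  shows "T (i, j) \<le> T (i', j')"
proof -
  have "(i, j') \<in> cells lam" using cells_downward_closed[OF assms(1,3,4)] by simp
  then have "T (i, j) \<le> T (i, j')" using ssyt_row_mono[OF assms(2)] assms(5) by blast
  also have "\<dots> \<le> T (i', j')"
    using ssyt_col_strict_mono[OF assms(1-3)] assms(4) by (cases "i = i'") (auto intro: less_imp_le)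
  finally show ?thesis .
qed

lemma ssyt_strict_mono:
  assumes "is_partition lam" "is_ssyt lam T" "(i', j') \<in> cells lam" "i < i'" "j \<le> j'"
  shows "T (i, j) < T (i', j')"
proof -
  have "(i, j') \<in> cells lam" using cells_downward_closed[OF assms(1,3)] assms(4) by simp
  then have "T (i, j) \<le> T (i, j')" using ssyt_row_mono[OF assms(2)] assms(5) by blast
  also have "\<dots> < T (i', j')" using ssyt_col_strict_mono[OF assms(1-4)] .
  finally show ?thesis .
qed

lemma ssyt_equal_entries_row_antimono:
  assumes "is_partition lam" "is_ssyt lam T" "c \<in> cells lam" "c' \<in> cells lam"
    "T c = T c'" "snd c < snd c'"
  shows "fst c' \<le> fst c"
proof (rule ccontr)
  assume "\<not> fst c' \<le> fst c"
  then have "T c < T c'"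
    using ssyt_strict_mono[OF assms(1,2), of "fst c'" "snd c'" "fst c" "snd c"] assms(4,6) by simp
  with assms(5) show False by simp
qed

definition rank :: "('a \<Rightarrow> 'b::linorder) \<Rightarrow> 'a set \<Rightarrow> 'a \<Rightarrow> nat" where
  "rank f A a = card {b \<in> A. f b \<le> f a}"

lemma rank_less_rank_iff:
  assumes "finite A" "a \<in> A" "b \<in> A"
  shows "rank f A a < rank f A b \<longleftrightarrow> f a < f b"
proof
  assume "f a < f b"
  then have "b \<in> {x \<in> A. f x \<le> f b} - {x \<in> A. f x \<le> f a}"
    using assms(3) by auto
  moreover have "{x \<in> A. f x \<le> f a} \<subseteq> {x \<in> A. f x \<le> f b}"
    using \<open>f a < f b\<close> by auto
  ultimately have "{x \<in> A. f x \<le> f a} \<subset> {x \<in> A. f x \<le> f b}"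
    by blast
  then show "rank f A a < rank f A b"
    unfolding rank_def by (rule psubset_card_mono[rotated]) (use assms(1) in auto)
next
  assume "rank f A a < rank f A b"
  show "f a < f b"
  proof (rule ccontr)
    assume "\<not> f a < f b"
    then have "rank f A b \<le> rank f A a"
      unfolding rank_def by (intro card_mono) (use assms(1) in auto)
    with \<open>rank f A a < rank f A b\<close> show False by simp
  qed
qed

lemma bij_betw_rank:
  assumes "finite A" "inj_on f A"
  shows "bij_betw (rank f A) A {1..card A}"
proof -
  have inj: "inj_on (rank f A) A"
  proof
    fix a b assume "a \<in> A" "b \<in> A" "rank f A a = rank f A b"
    then have "f a = f b"
      using rank_less_rank_iff[OF assms(1)] by (metis less_irrefl neqE)
    then show "a = b" using assms(2) \<open>a \<in> A\<close> \<open>b \<in> A\<close> by (meson inj_onD)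
  qed
  have "rank f A a \<in> {1..card A}" if "a \<in> A" for a
  proof -
    have "a \<in> {b \<in> A. f b \<le> f a}" using that by simp
    then have "0 < rank f A a" unfolding rank_def using assms(1) by (auto simp: card_gt_0_iff)
    moreover have "rank f A a \<le> card A"
      unfolding rank_def by (rule card_mono) (use assms(1) in auto)
    ultimately show ?thesis by simp
  qed
  then have "rank f A ` A \<subseteq> {1..card A}" by blast
  moreover have "card (rank f A ` A) = card {1..card A}"
    using card_image[OF inj] by simp
  ultimately have "rank f A ` A = {1..card A}"
    by (simp add: card_subset_eq)
  with inj show ?thesis unfolding bij_betw_def by simp
qed

lemma rank_bij_betw_interval:
  fixes f :: "'a \<Rightarrow> nat"
  assumes "bij_betw f A {1..N}" "a \<in> A"
  shows "rank f A a = f a"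
proof -
  have "f ` {b \<in> A. f b \<le> f a} = {1..f a}"
  proof
    show "f ` {b \<in> A. f b \<le> f a} \<subseteq> {1..f a}"
      using assms(1) by (auto simp: bij_betw_def)
    have "{1..f a} \<subseteq> f ` A"
      using assms by (auto simp: bij_betw_def)
    then show "{1..f a} \<subseteq> f ` {b \<in> A. f b \<le> f a}"
      by auto
  qed
  moreover have "inj_on f {b \<in> A. f b \<le> f a}"
    using assms(1) by (auto simp: bij_betw_def intro: inj_on_subset)
  ultimately show ?thesis
    unfolding rank_def using card_image by fastforce
qed

section \<open>Standardization and destandardization\<close>

definition std_key :: "(nat \<times> nat \<Rightarrow> nat) \<Rightarrow> nat \<times> nat \<Rightarrow> nat \<times> nat" where
  "std_key T c = (T c, snd c)"

definition standardize :: "nat list \<Rightarrow> (nat \<times> nat \<Rightarrow> nat) \<Rightarrow> nat \<times> nat \<Rightarrow> nat" where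
  "standardize lam T c = (if c \<in> cells lam then rank (std_key T) (cells lam) c else 0)"

lemma inj_on_std_key:
  assumes "is_partition lam" "is_ssyt lam T"
  shows "inj_on (std_key T) (cells lam)"
proof
  fix c d assume cd: "c \<in> cells lam" "d \<in> cells lam" "std_key T c = std_key T d"
  then have "T c = T d" "snd c = snd d" by (auto simp: std_key_def)
  moreover have "fst c = fst d"
    using ssyt_col_strict_mono[OF assms, of "fst c" "snd c" "fst d"]
      ssyt_col_strict_mono[OF assms, of "fst d" "snd d" "fst c"] cd calculation
    by (metis linorder_neqE_nat order_less_irrefl prod.collapse)
  ultimately show "c = d" by (simp add: prod_eq_iff)
qed

lemma standardize_less_iff:
  assumes "c \<in> cells lam" "d \<in> cells lam"
  shows "standardize lam T d < standardize lam T c \<longleftrightarrow> std_key T d < std_key T c"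
  using rank_less_rank_iff[OF finite_cells assms(2,1)] assms by (simp add: standardize_def)

lemma standardize_le_iff:
  assumes "c \<in> cells lam" "d \<in> cells lam"
  shows "standardize lam T d \<le> standardize lam T c \<longleftrightarrow> std_key T d \<le> std_key T c"
  using standardize_less_iff[OF assms(2,1)] by (meson not_le)

lemma bij_betw_standardize:
  assumes "is_partition lam" "is_ssyt lam T"
  shows "bij_betw (standardize lam T) (cells lam) {1..sum_list lam}"
proof -
  have "bij_betw (rank (std_key T) (cells lam)) (cells lam) {1..sum_list lam}"
    using bij_betw_rank[OF finite_cells inj_on_std_key[OF assms]] by (simp add: card_cells)
  then show ?thesis
    by (rule bij_betw_cong[THEN iffD1, rotated]) (simp add: standardize_def)
qed

lemma is_syt_standardize:
  assumes "is_partition lam" "is_ssyt lam T"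
  shows "is_syt lam (standardize lam T)"
proof -
  have rows: "standardize lam T (i, j) \<le> standardize lam T (i, Suc j)"
    if "(i, Suc j) \<in> cells lam" for i j
  proof -
    have "(i, j) \<in> cells lam" using that by (auto simp: cells_def)
    moreover have "T (i, j) \<le> T (i, Suc j)" using assms(2) that by (auto simp: is_ssyt_def)
    ultimately show ?thesis
      using standardize_le_iff[OF that] by (simp add: std_key_def)
  qed
  have cols: "standardize lam T (i, j) < standardize lam T (Suc i, j)"
    if "(Suc i, j) \<in> cells lam" for i j
  proof -
    have "(i, j) \<in> cells lam" using cells_downward_closed[OF assms(1) that] by simp
    moreover have "T (i, j) < T (Suc i, j)" using assms(2) that by (auto simp: is_ssyt_def)
    ultimately show ?thesis
      using standardize_less_iff[OF that] by (simp add: std_key_def)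
  qed
  show ?thesis
    using rows cols bij_betw_standardize[OF assms]
    unfolding is_syt_def is_ssyt_def by (auto simp: standardize_def bij_betw_def)
qed

definition descent :: "nat list \<Rightarrow> (nat \<times> nat \<Rightarrow> nat) \<Rightarrow> nat \<Rightarrow> bool" where
  "descent lam S k \<longleftrightarrow>
     (\<exists>c\<in>cells lam. \<exists>c'\<in>cells lam. S c = k \<and> S c' = Suc k \<and> fst c < fst c')"

definition descent_count :: "nat list \<Rightarrow> (nat \<times> nat \<Rightarrow> nat) \<Rightarrow> nat \<Rightarrow> nat" where
  "descent_count lam S k = card {i. i < k \<and> descent lam S i}"

definition destandardize :: "nat list \<Rightarrow> (nat \<times> nat \<Rightarrow> nat) \<Rightarrow> nat \<times> nat \<Rightarrow> nat" where
  "destandardize lam S c = (if c \<in> cells lam then Suc (descent_count lam S (S c)) else 0)"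

lemma descent_count_mono: "k \<le> k' \<Longrightarrow> descent_count lam S k \<le> descent_count lam S k'"
  unfolding descent_count_def by (rule card_mono) auto

lemma descent_count_Suc:
  "descent_count lam S (Suc k) = descent_count lam S k + (if descent lam S k then 1 else 0)"
proof -
  have "{i. i < Suc k \<and> descent lam S i} =
      (if descent lam S k then insert k else id) {i. i < k \<and> descent lam S i}"
    by (auto simp: less_Suc_eq)
  then show ?thesis by (simp add: descent_count_def)
qed

lemma descent_count_strict_mono:
  assumes "descent lam S k" "a \<le> k" "k < b"
  shows "descent_count lam S a < descent_count lam S b"
proof -
  have "descent_count lam S a \<le> descent_count lam S k"
    using descent_count_mono assms(2) .
  also have "\<dots> < descent_count lam S (Suc k)"
    using descent_count_Suc assms(1) by simp
  also have "\<dots> \<le> descent_count lam S b"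
    using descent_count_mono assms(3) by simp
  finally show ?thesis .
qed

locale standard_tableau =
  fixes lam :: "nat list" and S :: "nat \<times> nat \<Rightarrow> nat"
  assumes partition: "is_partition lam" and syt: "is_syt lam S"
begin

lemma ssyt: "is_ssyt lam S"
  using syt by (simp add: is_syt_def)

lemma bij: "bij_betw S (cells lam) {1..sum_list lam}"
  using syt by (simp add: is_syt_def)

lemma cell_eqI: "c \<in> cells lam \<Longrightarrow> d \<in> cells lam \<Longrightarrow> S c = S d \<Longrightarrow> c = d"
  using bij by (auto simp: bij_betw_def inj_on_def)

lemma entry_range: "c \<in> cells lam \<Longrightarrow> 1 \<le> S c \<and> S c \<le> sum_list lam"
  using bij by (auto simp: bij_betw_def)

lemma obtain_cell:
  assumes "1 \<le> k" "k \<le> sum_list lam"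
  obtains c where "c \<in> cells lam" "S c = k"
proof -
  have "k \<in> S ` cells lam" using assms bij by (simp add: bij_betw_def)
  then show ?thesis using that by blast
qed

lemma descent_iff:
  "c \<in> cells lam \<Longrightarrow> c' \<in> cells lam \<Longrightarrow> S c = k \<Longrightarrow> S c' = Suc k \<Longrightarrow>
    descent lam S k \<longleftrightarrow> fst c < fst c'"
  unfolding descent_def using cell_eqI by metis

lemma not_descent_0: "\<not> descent lam S 0"
proof
  assume "descent lam S 0"
  then obtain c where "c \<in> cells lam" "S c = 0" unfolding descent_def by blast
  then show False using entry_range by fastforce
qed

lemma entry_mono:
  "c \<in> cells lam \<Longrightarrow> d \<in> cells lam \<Longrightarrow> fst d \<le> fst c \<Longrightarrow> snd d \<le> snd c \<Longrightarrow> S d \<le> S c"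
  using ssyt_mono[OF partition ssyt, of "fst c" "snd c" "fst d" "snd d"] by simp

text \<open>Otherwise the cell in the row of c' and the column of c would lie strictly between
  c and c' in S.\<close>
lemma descent_weakly_left:
  assumes "c \<in> cells lam" "c' \<in> cells lam" "S c' = Suc (S c)" "fst c < fst c'"
  shows "snd c' \<le> snd c"
proof (rule ccontr)
  assume "\<not> snd c' \<le> snd c"
  define e where "e = (fst c', snd c)"
  have e: "e \<in> cells lam"
    using cells_downward_closed[OF partition, of "fst c'" "snd c'"] assms(2) \<open>\<not> snd c' \<le> snd c\<close>
    by (simp add: e_def)
  have "S c < S e"
    using ssyt_strict_mono[OF partition ssyt, of "fst c'" "snd c" "fst c" "snd c"] e assms(4)
    by (simp add: e_def)
  moreover have "S e \<le> S c'"
    using entry_mono[OF assms(2) e] \<open>\<not> snd c' \<le> snd c\<close> by (simp add: e_def)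
  moreover have "e \<noteq> c'"
    using \<open>\<not> snd c' \<le> snd c\<close> by (cases c') (auto simp: e_def)
  ultimately have "Suc (S c) < S c'"
    using cell_eqI[OF e assms(2)] by fastforce
  with assms(3) show False by simp
qed

lemma step_without_descent:
  assumes "c \<in> cells lam" "c' \<in> cells lam" "S c' = Suc (S c)" "\<not> descent lam S (S c)"
  shows "fst c' \<le> fst c \<and> snd c < snd c'"
proof -
  have "fst c' \<le> fst c" using descent_iff[OF assms(1,2) refl assms(3)] assms(4) by simp
  moreover have "snd c < snd c'"
  proof (rule ccontr)
    assume "\<not> snd c < snd c'"
    then have "S c' \<le> S c" using entry_mono[OF assms(1,2) \<open>fst c' \<le> fst c\<close>] by simp
    with assms(3) show False by simp
  qed
  ultimately show ?thesis by simp
qed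

lemma run_without_descent:
  assumes "c \<in> cells lam" "c' \<in> cells lam" "S c < S c'"
    "\<And>k. S c \<le> k \<Longrightarrow> k < S c' \<Longrightarrow> \<not> descent lam S k"
  shows "fst c' \<le> fst c \<and> snd c < snd c'"
proof -
  have "fst c' \<le> fst c \<and> snd c < snd c'"
    if "Suc (S c) \<le> k" "c' \<in> cells lam" "S c' = k" "\<forall>i. S c \<le> i \<and> i < k \<longrightarrow> \<not> descent lam S i"
    for k c'
    using that
  proof (induction k arbitrary: c' rule: dec_induct)
    case base
    then show ?case using step_without_descent[OF assms(1)] by simp
  next
    case (step k)
    have "1 \<le> k" "k \<le> sum_list lam"
      using step.hyps(1) entry_range[OF step.prems(1)] step.prems(2) by auto
    then obtain c1 where c1: "c1 \<in> cells lam" "S c1 = k"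
      by (rule obtain_cell)
    have "fst c1 \<le> fst c \<and> snd c < snd c1"
      using step.IH[OF c1] step.prems(3) by simp
    moreover have "fst c' \<le> fst c1 \<and> snd c1 < snd c'"
      using step_without_descent[OF c1(1) step.prems(1)] step.prems(2,3) step.hyps(1) c1(2) by simp
    ultimately show ?case by simp
  qed
  then show ?thesis using Suc_leI[OF assms(3)] assms(2,4) by blast
qed

lemma run_of_equal_descent_count:
  assumes "c \<in> cells lam" "c' \<in> cells lam" "S c < S c'"
    "descent_count lam S (S c) = descent_count lam S (S c')"
  shows "fst c' \<le> fst c \<and> snd c < snd c'"
  using run_without_descent[OF assms(1-3)] descent_count_strict_mono assms(4) by fastforce

abbreviation T :: "nat \<times> nat \<Rightarrow> nat" where
  "T \<equiv> destandardize lam S"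

lemma descent_count_1: "descent_count lam S 1 = 0"
  using descent_count_Suc[of lam S 0] not_descent_0 by (simp add: descent_count_def)

lemma destandardize_cell: "c \<in> cells lam \<Longrightarrow> T c = Suc (descent_count lam S (S c))"
  by (simp add: destandardize_def)

lemma destandardize_mono: "c \<in> cells lam \<Longrightarrow> d \<in> cells lam \<Longrightarrow> S d \<le> S c \<Longrightarrow> T d \<le> T c"
  by (simp add: destandardize_cell descent_count_mono)

lemma destandardize_equal_moves_right:
  assumes "c \<in> cells lam" "d \<in> cells lam" "S d < S c" "T d = T c"
  shows "fst c \<le> fst d \<and> snd d < snd c"
  using run_of_equal_descent_count[OF assms(2,1,3)] assms(1,2,4) by (simp add: destandardize_cell)

lemma is_ssyt_destandardize: "is_ssyt lam T"
proof -
  have rows: "T (i, j) \<le> T (i, Suc j)" if "(i, Suc j) \<in> cells lam" for i j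
  proof -
    have "(i, j) \<in> cells lam" using that by (auto simp: cells_def)
    moreover have "S (i, j) \<le> S (i, Suc j)" using ssyt that by (auto simp: is_ssyt_def)
    ultimately show ?thesis using destandardize_mono[OF that] by simp
  qed
  have cols: "T (i, j) < T (Suc i, j)" if "(Suc i, j) \<in> cells lam" for i j
  proof -
    have c: "(i, j) \<in> cells lam" using cells_downward_closed[OF partition that] by simp
    have "S (i, j) < S (Suc i, j)" using ssyt that by (auto simp: is_ssyt_def)
    then show ?thesis
      using destandardize_mono[OF that c] destandardize_equal_moves_right[OF that c]
      by fastforce
  qed
  show ?thesis unfolding is_ssyt_def using rows cols by (auto simp: destandardize_def)
qed

lemma std_key_destandardize_less:
  assumes "c \<in> cells lam" "d \<in> cells lam" "S d < S c"
  shows "std_key T d < std_key T c"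
  using destandardize_mono[OF assms(1,2)] destandardize_equal_moves_right[OF assms] assms(3)
  by (cases "T d = T c") (auto simp: std_key_def)

lemma standardize_destandardize: "standardize lam T = S"
proof
  fix c
  show "standardize lam T c = S c"
  proof (cases "c \<in> cells lam")
    case True
    have "{d \<in> cells lam. std_key T d \<le> std_key T c} = {d \<in> cells lam. S d \<le> S c}"
    proof (intro Collect_cong conj_cong refl iffI)
      fix d assume d: "d \<in> cells lam"
      show "S d \<le> S c" if "std_key T d \<le> std_key T c"
        using that std_key_destandardize_less[OF d True] by (meson leD leI)
      show "std_key T d \<le> std_key T c" if "S d \<le> S c"
        using that std_key_destandardize_less[OF True d] cell_eqI[OF d True]
        by (cases "S d = S c") (auto intro: less_imp_le)
    qed
    then show ?thesis
      using True rank_bij_betw_interval[OF bij True] by (simp add: standardize_def rank_def)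
  next
    case False
    then have "S c = 0" using ssyt unfolding is_ssyt_def by blast
    with False show ?thesis by (simp add: standardize_def)
  qed
qed

lemma destandardize_quasi_yamanouchi: "is_quasi_yamanouchi lam T"
  unfolding is_quasi_yamanouchi_def
proof (intro allI impI)
  fix v assume v: "1 < v \<and> v \<in> T ` cells lam"
  define A where "A = {c \<in> cells lam. T c = v}"
  have "finite (S ` A)" "S ` A \<noteq> {}" using finite_cells v by (auto simp: A_def)
  then have "Min (S ` A) \<in> S ` A" by (rule Min_in)
  then obtain c where "c \<in> A" and c_Min: "S c = Min (S ` A)" by (metis imageE)
  then have c: "c \<in> cells lam" "T c = v" by (simp_all add: A_def)
  have c_min: "S c \<le> S c'" if "c' \<in> A" for c'
    using \<open>finite (S ` A)\<close> that by (simp add: c_Min)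
  have "S c \<noteq> 1" using c v destandardize_cell[OF c(1)] descent_count_1 by auto
  then have "1 \<le> S c - 1" "S c - 1 \<le> sum_list lam" using entry_range[OF c(1)] by auto
  then obtain d where d: "d \<in> cells lam" "S d = S c - 1"
    by (rule obtain_cell)
  then have Sc: "S c = Suc (S d)" using \<open>1 \<le> S c - 1\<close> by simp
  have "T d \<noteq> v" using c_min[of d] d(1) Sc by (auto simp: A_def)
  moreover have "T c = T d + (if descent lam S (S d) then 1 else 0)"
    using destandardize_cell[OF c(1)] destandardize_cell[OF d(1)] Sc descent_count_Suc by simp
  ultimately have "descent lam S (S d)" and Td: "T d = v - 1"
    using c(2) by (auto split: if_splits)
  then have "snd c \<le> snd d"
    using descent_weakly_left[OF d(1) c(1) Sc] descent_iff[OF d(1) c(1) refl Sc] by simp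
  moreover have "Min {snd c' |c'. c' \<in> cells lam \<and> T c' = v} \<le> snd c"
  proof (rule Min_le)
    have "{snd c' |c'. c' \<in> cells lam \<and> T c' = v} = snd ` A" by (auto simp: A_def image_iff)
    then show "finite {snd c' |c'. c' \<in> cells lam \<and> T c' = v}"
      using finite_cells by (simp add: A_def)
    show "snd c \<in> {snd c' |c'. c' \<in> cells lam \<and> T c' = v}" using c by blast
  qed
  ultimately show "\<exists>d\<in>cells lam. T d = v - 1 \<and> Min {snd c |c. c \<in> cells lam \<and> T c = v} \<le> snd d"
    using d(1) Td by auto
qed

text \<open>If k is a descent, then k + 1 is the entry of a cell outside the bottom row.\<close>
lemma descent_count_le_card_upper_rows:
  "descent_count lam S k \<le> card {c \<in> cells lam. 0 < fst c}"
proof -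
  let ?U = "{c \<in> cells lam. 0 < fst c}"
  have sub: "Suc ` {i. descent lam S i} \<subseteq> S ` ?U"
    by (force simp: descent_def)
  have "finite (Suc ` {i. descent lam S i})"
    using sub by (rule finite_subset) (simp add: finite_cells)
  then have fin: "finite {i. descent lam S i}"
    by (rule finite_imageD) simp
  have "descent_count lam S k \<le> card {i. descent lam S i}"
    unfolding descent_count_def using fin by (intro card_mono) auto
  also have "\<dots> = card (Suc ` {i. descent lam S i})"
    by (simp add: card_image)
  also have "\<dots> \<le> card (S ` ?U)"
    using sub finite_cells by (intro card_mono) auto
  also have "\<dots> \<le> card ?U"
    by (rule card_image_le) (simp add: finite_cells)
  finally show ?thesis .
qed

lemma destandardize_le:
  assumes "c \<in> cells lam"
  shows "T c + largest_part lam \<le> Suc (sum_list lam)"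
  using destandardize_cell[OF assms] descent_count_le_card_upper_rows[of "S c"] card_upper_rows[of lam]
  by linarith

lemma destandardize_in_QYT_le:
  assumes "Suc (sum_list lam) \<le> m + largest_part lam"
  shows "T \<in> QYT_le m lam"
  using is_ssyt_destandardize destandardize_quasi_yamanouchi destandardize_le assms
  by (fastforce simp: QYT_le_def)

end

section \<open>Quasi-Yamanouchi tableaux\<close>

locale quasi_yamanouchi_tableau =
  fixes lam :: "nat list" and T :: "nat \<times> nat \<Rightarrow> nat"
  assumes partition: "is_partition lam" and ssyt: "is_ssyt lam T"
    and quasi_yamanouchi: "is_quasi_yamanouchi lam T"
begin

abbreviation S :: "nat \<times> nat \<Rightarrow> nat" where
  "S \<equiv> standardize lam T"

sublocale std: standard_tableau lam S
  using partition is_syt_standardize[OF partition ssyt] by unfold_locales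

lemma no_std_key_between:
  assumes "c \<in> cells lam" "c' \<in> cells lam" "S c' = Suc (S c)" "d \<in> cells lam"
  shows "\<not> (std_key T c < std_key T d \<and> std_key T d < std_key T c')"
proof
  assume "std_key T c < std_key T d \<and> std_key T d < std_key T c'"
  then have "S c < S d" "S d < S c'"
    using standardize_less_iff[OF assms(4,1), where T = T]
      standardize_less_iff[OF assms(2,4), where T = T] by blast+
  with assms(3) show False by simp
qed

lemma standardize_eq_1_imp_entry_eq_1:
  assumes "c \<in> cells lam" "S c = 1"
  shows "T c = 1"
proof (rule ccontr)
  assume "T c \<noteq> 1"
  then have "1 < T c" using ssyt assms(1) by (auto simp: is_ssyt_def)
  then obtain d where "d \<in> cells lam" "T d = T c - 1"
    using quasi_yamanouchi assms(1) unfolding is_quasi_yamanouchi_def by blast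
  then have "S d < S c"
    using standardize_less_iff[OF assms(1), where T = T] \<open>1 < T c\<close> by (simp add: std_key_def)
  with assms(2) std.entry_range[OF \<open>d \<in> cells lam\<close>] show False by simp
qed

text \<open>The quasi-Yamanouchi condition provides a cell d with entry v - 1 weakly right of the
  leftmost v; since c is the last cell read before the first v, d precedes c, so c has entry
  v - 1 and lies weakly right of that leftmost v, which forces c' into a higher row.\<close>
lemma consecutive_entry_increase:
  assumes c: "c \<in> cells lam" and c': "c' \<in> cells lam" and "S c' = Suc (S c)"
    and "T c \<noteq> T c'"
  shows "T c' = Suc (T c) \<and> fst c < fst c'"
proof -
  define v where "v = T c'"
  have "std_key T c < std_key T c'"
    using standardize_less_iff[OF c' c, where T = T] assms(3) by simp
  then have "T c < v" using assms(4) by (auto simp: std_key_def v_def)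
  moreover have "1 \<le> T c" using ssyt c by (auto simp: is_ssyt_def)
  ultimately have "1 < v" by simp
  define A where "A = {x \<in> cells lam. T x = v}"
  have "v \<in> T ` cells lam" using c' by (simp add: v_def)
  then have "\<exists>d\<in>cells lam. T d = v - 1 \<and> Min {snd x |x. x \<in> cells lam \<and> T x = v} \<le> snd d"
    using quasi_yamanouchi \<open>1 < v\<close> unfolding is_quasi_yamanouchi_def by blast
  moreover have "{snd x |x. x \<in> cells lam \<and> T x = v} = snd ` A"
    by (auto simp: A_def image_iff)
  ultimately obtain d where d: "d \<in> cells lam" "T d = v - 1" and d_right: "Min (snd ` A) \<le> snd d"
    by auto
  have Tc: "T c = v - 1"
    using no_std_key_between[OF c c' assms(3) d(1)] d(2) \<open>T c < v\<close> \<open>1 < v\<close>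
    by (auto simp: std_key_def v_def)
  have "finite (snd ` A)" "c' \<in> A" using finite_cells c' by (auto simp: A_def v_def)
  then have "Min (snd ` A) \<in> snd ` A" by (intro Min_in) auto
  then obtain c'' where c'': "c'' \<in> cells lam" "T c'' = v" "snd c'' = Min (snd ` A)"
    by (auto simp: A_def)
  have "\<not> std_key T c'' < std_key T c'"
    using no_std_key_between[OF c c' assms(3) c''(1)] c''(2) Tc \<open>1 < v\<close>
    by (auto simp: std_key_def)
  then have "snd c' \<le> snd c''" using c''(2) by (auto simp: std_key_def v_def)
  also have "\<dots> \<le> snd d" using c''(3) d_right by simp
  also have "snd d \<le> snd c"
    using no_std_key_between[OF c c' assms(3) d(1)] d(2) Tc \<open>1 < v\<close>
    by (auto simp: std_key_def v_def)
  finally have "snd c' \<le> snd c" .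
  then have "fst c < fst c'"
    using ssyt_mono[OF partition ssyt, of "fst c" "snd c" "fst c'" "snd c'"] c \<open>T c < v\<close>
    by (auto simp: v_def not_less[symmetric])
  with Tc \<open>1 < v\<close> show ?thesis by (simp add: v_def)
qed

lemma consecutive_entry:
  assumes c: "c \<in> cells lam" and c': "c' \<in> cells lam" and "S c' = Suc (S c)"
  shows "T c' = (if fst c < fst c' then Suc (T c) else T c)"
proof (cases "T c = T c'")
  case True
  have "std_key T c < std_key T c'"
    using standardize_less_iff[OF c' c, where T = T] assms(3) by simp
  then have "snd c < snd c'" using True by (simp add: std_key_def)
  then have "fst c' \<le> fst c"
    using ssyt_equal_entries_row_antimono[OF partition ssyt c c' True] by simp
  with True show ?thesis by simp
next
  case False
  then show ?thesis using consecutive_entry_increase[OF assms] by simp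
qed

lemma entry_eq_destandardize:
  assumes "c \<in> cells lam"
  shows "T c = Suc (descent_count lam S (S c))"
  using assms
proof (induction "S c" arbitrary: c)
  case 0
  then show ?case using std.entry_range by fastforce
next
  case (Suc k)
  show ?case
  proof (cases "k = 0")
    case True
    then show ?thesis
      using standardize_eq_1_imp_entry_eq_1 Suc std.descent_count_1 by simp
  next
    case False
    then have "1 \<le> k" "k \<le> sum_list lam" using std.entry_range[OF Suc.prems] Suc.hyps(2) by auto
    then obtain c0 where c0: "c0 \<in> cells lam" "S c0 = k" by (rule std.obtain_cell)
    have "S c = Suc (S c0)" using c0 Suc.hyps(2) by simp
    then show ?thesis
      using Suc.hyps(1)[OF c0(2)[symmetric] c0(1)] consecutive_entry[OF c0(1) Suc.prems]
        std.descent_iff[OF c0(1) Suc.prems c0(2)] descent_count_Suc c0(2) Suc.hyps(2)[symmetric]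
      by simp
  qed
qed

lemma destandardize_standardize: "destandardize lam S = T"
proof
  fix c
  show "destandardize lam S c = T c"
  proof (cases "c \<in> cells lam")
    case True
    then show ?thesis by (simp add: destandardize_def entry_eq_destandardize)
  next
    case False
    then have "T c = 0" using ssyt unfolding is_ssyt_def by blast
    with False show ?thesis by (simp add: destandardize_def)
  qed
qed

end

theorem proposition3p2:
  fixes lam :: "nat list" and n m :: nat
  assumes "is_partition lam"
    and "sum_list lam = n"
    and "int m \<ge> int n - (int (largest_part lam) - 1)"
  shows "(\<exists>f. bij_betw f (QYT_le m lam) (SYT lam)) \<and> card (QYT_le m lam) = card (SYT lam)"
proof -
  have m: "Suc (sum_list lam) \<le> m + largest_part lam" using assms(2,3) by linarith
  have "bij_betw (standardize lam) (QYT_le m lam) (SYT lam)"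
  proof (rule bij_betw_byWitness[where f' = "destandardize lam"])
    show "\<forall>T\<in>QYT_le m lam. destandardize lam (standardize lam T) = T"
      using quasi_yamanouchi_tableau.destandardize_standardize assms(1)
      by (auto simp: QYT_le_def quasi_yamanouchi_tableau_def)
    show "\<forall>S\<in>SYT lam. standardize lam (destandardize lam S) = S"
      using standard_tableau.standardize_destandardize assms(1)
      by (auto simp: SYT_def standard_tableau_def)
    show "standardize lam ` QYT_le m lam \<subseteq> SYT lam"
      using is_syt_standardize[OF assms(1)] by (auto simp: QYT_le_def SYT_def)
    show "destandardize lam ` SYT lam \<subseteq> QYT_le m lam"
      using standard_tableau.destandardize_in_QYT_le[OF _ m] assms(1)
      by (auto simp: SYT_def standard_tableau_def)
  qed
  then show ?thesis using bij_betw_same_card by blast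
qed

end
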